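(* In anonymous graphs of maximum degree $4$, there exists a randomized strategy (an oracle placement of quantum pebbles together with an oblivious agent's measurement-based rule), using at most a single quantum pebble at each node and $D$ quantum pebbles in total, with which the agent finds the treasure in $D$ steps with probability close to $1$, where $D$ is the length of a shortest path from the agent's starting node to the treasure. The agent needs to make $O(\log D)$ measurements at each node.
   Context: Anonymous graph: connected simple undirected graph with unlabelled, indistinguishable nodes; the edges at each node carry distinct local port numbers. An agent starts at a source node and must reach a stationary treasure node; $D$ is the shortest-path distance between them. In each round the agent learns the degree of its current node (and, here, can measure qubits emitted by a quantum pebble at that node), computes, and moves along at most one edge. The agent is oblivious: it retains no memory between rounds. A quantum pebble is a source placed at a node by an oracle (which knows the instance) that repeatedly emits qubits, all in the same quantum state unknown to the agent; the agent can perform projective single-qubit measurements in chosen orthonormal bases on as many emitted copies as it wants. *)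

theory Defs
  imports "HOL-Probability.Probability"
begin

text \<open>A graph is given by a vertex set V, a degree function deg and a port function
  nbr: nbr v i is the neighbour of v reached through local port i (i < deg v).\<close>

definition adj :: "('v \<Rightarrow> nat) \<Rightarrow> ('v \<Rightarrow> nat \<Rightarrow> 'v) \<Rightarrow> 'v \<Rightarrow> 'v \<Rightarrow> bool" where
  "adj deg nbr u v \<longleftrightarrow> (\<exists>i<deg u. nbr u i = v)"

inductive reach_in :: "('v \<Rightarrow> nat) \<Rightarrow> ('v \<Rightarrow> nat \<Rightarrow> 'v) \<Rightarrow> nat \<Rightarrow> 'v \<Rightarrow> 'v \<Rightarrow> bool"
  for deg nbr where
  refl: "reach_in deg nbr 0 u u"
| step: "adj deg nbr u w \<Longrightarrow> reach_in deg nbr n w v \<Longrightarrow> reach_in deg nbr (Suc n) u v"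

definition gdist :: "('v \<Rightarrow> nat) \<Rightarrow> ('v \<Rightarrow> nat \<Rightarrow> 'v) \<Rightarrow> 'v \<Rightarrow> 'v \<Rightarrow> nat" where
  "gdist deg nbr u v = (LEAST n. reach_in deg nbr n u v)"

text \<open>Connected simple undirected graph with distinct local port numbers at each node.\<close>
definition port_graph :: "'v set \<Rightarrow> ('v \<Rightarrow> nat) \<Rightarrow> ('v \<Rightarrow> nat \<Rightarrow> 'v) \<Rightarrow> bool" where
  "port_graph V deg nbr \<longleftrightarrow>
     V \<noteq> {} \<and>
     (\<forall>v\<in>V. \<forall>i<deg v. nbr v i \<in> V \<and> nbr v i \<noteq> v) \<and>
     (\<forall>v\<in>V. inj_on (nbr v) {..<deg v}) \<and>
     (\<forall>v\<in>V. \<forall>i<deg v. adj deg nbr (nbr v i) v) \<and>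
     (\<forall>u\<in>V. \<forall>v\<in>V. \<exists>n. reach_in deg nbr n u v)"

text \<open>A pure single-qubit state: a unit vector in C^2.\<close>
type_synonym qubit = "complex \<times> complex"

definition unit_qubit :: "qubit \<Rightarrow> bool" where
  "unit_qubit q \<longleftrightarrow> (cmod (fst q))\<^sup>2 + (cmod (snd q))\<^sup>2 = 1"

text \<open>Projective measurement in the orthonormal basis {b, b-perp}: outcome True
  (projection onto b) has probability |<b|psi>|^2 / |b|^2.\<close>
definition meas_prob :: "qubit \<Rightarrow> qubit \<Rightarrow> real" where
  "meas_prob b psi =
     (cmod (cnj (fst b) * fst psi + cnj (snd b) * snd psi))\<^sup>2
       / ((cmod (fst b))\<^sup>2 + (cmod (snd b))\<^sup>2)"

text \<open>An adaptive measurement protocol executed within one round: either decide a move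
  (None = stay, Some p = leave via port p) or measure a fresh emitted copy in a chosen
  basis and continue depending on the outcome.\<close>
datatype protocol = Decide "nat option" | Measure qubit "bool \<Rightarrow> protocol"

primrec run_protocol :: "qubit \<Rightarrow> protocol \<Rightarrow> nat option pmf" where
  "run_protocol psi (Decide m) = return_pmf m"
| "run_protocol psi (Measure b f) =
     bind_pmf (bernoulli_pmf (meas_prob b psi)) (\<lambda>r. (run_protocol psi \<circ> f) r)"

primrec num_meas :: "protocol \<Rightarrow> nat" where
  "num_meas (Decide m) = 0"
| "num_meas (Measure b f) = Suc (max ((num_meas \<circ> f) False) ((num_meas \<circ> f) True))"

text \<open>One round of the oblivious agent at node v: it sees only deg v and (if there is
  a pebble) the emitted qubits. The treasure node is absorbing (the hunt ends once
  the treasure is found).\<close>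
definition agent_step ::
  "('v \<Rightarrow> nat) \<Rightarrow> ('v \<Rightarrow> nat \<Rightarrow> 'v) \<Rightarrow> 'v \<Rightarrow> ('v \<Rightarrow> qubit option)
   \<Rightarrow> (nat \<Rightarrow> protocol) \<Rightarrow> (nat \<Rightarrow> nat option pmf) \<Rightarrow> 'v \<Rightarrow> 'v pmf" where
  "agent_step deg nbr t peb rule nopeb v =
     (if v = t then return_pmf v
      else map_pmf (\<lambda>m. case m of None \<Rightarrow> v
                                 | Some p \<Rightarrow> if p < deg v then nbr v p else v)
             (case peb v of None \<Rightarrow> nopeb (deg v)
                          | Some psi \<Rightarrow> run_protocol psi (rule (deg v))))"

definition agent_pos ::
  "('v \<Rightarrow> nat) \<Rightarrow> ('v \<Rightarrow> nat \<Rightarrow> 'v) \<Rightarrow> 'v \<Rightarrow> ('v \<Rightarrow> qubit option)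
   \<Rightarrow> (nat \<Rightarrow> protocol) \<Rightarrow> (nat \<Rightarrow> nat option pmf) \<Rightarrow> 'v \<Rightarrow> nat \<Rightarrow> 'v pmf" where
  "agent_pos deg nbr t peb rule nopeb s n =
     ((\<lambda>P. bind_pmf P (agent_step deg nbr t peb rule nopeb)) ^^ n) (return_pmf s)"

end

theory Submission
  imports Defs
begin

text \<open>The oracle places, on every node of a fixed shortest path except the treasure, a pebble
  emitting one of the four states |0>, |1>, |+>, |-> naming the port that continues the path.
  One Z measurement followed by k repeated Z measurements separates the basis states, which
  always repeat their first outcome, from |+> and |->, which fail to do so except with
  probability 2^-k; a disagreement triggers an X measurement that tells |+> from |->
  deterministically. With k = log D + O(1), i.e. O(log D) measurements per node, each of the
  D moves is correct with probability at least 1 - 2^-k, so by Bernoulli's inequality the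
  whole path is followed with probability at least 1 - D 2^-k, which is close to 1.\<close>

definition port_qubit :: "nat \<Rightarrow> qubit" where
  "port_qubit j =
     (let h = complex_of_real (1 / sqrt 2)
      in if j = 0 then (1, 0) else if j = 1 then (0, 1) else if j = 2 then (h, h) else (h, - h))"

definition x_protocol :: protocol where
  "x_protocol = Measure (1, 1) (\<lambda>r. Decide (Some (if r then 2 else 3)))"

fun z_repeat_protocol :: "bool \<Rightarrow> nat \<Rightarrow> protocol" where
  "z_repeat_protocol c 0 = Decide (Some (if c then 0 else 1))"
| "z_repeat_protocol c (Suc k) =
     Measure (1, 0) (\<lambda>r. if r = c then z_repeat_protocol c k else x_protocol)"

definition port_protocol :: "nat \<Rightarrow> protocol" where
  "port_protocol k = Measure (1, 0) (\<lambda>c. z_repeat_protocol c k)"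

lemma num_meas_z_repeat_protocol: "num_meas (z_repeat_protocol c k) \<le> k + 1"
  by (induction k) (auto simp: x_protocol_def)

lemma num_meas_port_protocol: "num_meas (port_protocol k) \<le> k + 2"
  using num_meas_z_repeat_protocol[of True k] num_meas_z_repeat_protocol[of False k]
  by (simp add: port_protocol_def)

lemma cmod_inv_sqrt2_squared: "(cmod (1 / complex_of_real (sqrt 2)))\<^sup>2 = 1 / 2"
  by (simp add: norm_divide power_divide)

lemma unit_qubit_port_qubit: "unit_qubit (port_qubit j)"
  by (auto simp: unit_qubit_def port_qubit_def Let_def cmod_inv_sqrt2_squared)

lemma meas_prob_z_basis: "meas_prob (1, 0) psi = (cmod (fst psi))\<^sup>2"
  by (simp add: meas_prob_def)

lemma meas_prob_z_basis_port_qubit: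
  "meas_prob (1, 0) (port_qubit j) = (if j = 0 then 1 else if j = 1 then 0 else 1 / 2)"
  by (simp add: meas_prob_z_basis port_qubit_def Let_def cmod_inv_sqrt2_squared)

lemma meas_prob_x_basis_port_qubit:
  assumes "j = 2 \<or> j = 3"
  shows "meas_prob (1, 1) (port_qubit j) = (if j = 2 then 1 else 0)"
proof -
  have "(cmod (2 * (1 / complex_of_real (sqrt 2))))\<^sup>2 = 2"
    by (simp only: norm_mult power_mult_distrib cmod_inv_sqrt2_squared) simp
  then show ?thesis
    using assms by (auto simp: meas_prob_def port_qubit_def Let_def mult_2[symmetric])
qed

lemma pmf_bind_bernoulli:
  assumes "0 \<le> p" "p \<le> 1"
  shows "pmf (bernoulli_pmf p \<bind> f) x = p * pmf (f True) x + (1 - p) * pmf (f False) x"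
  using assms by (simp add: pmf_bind algebra_simps)

lemma pmf_x_protocol:
  assumes "j = 2 \<or> j = 3"
  shows "pmf (run_protocol (port_qubit j) x_protocol) (Some j) = 1"
  using assms by (auto simp: x_protocol_def pmf_bind_bernoulli meas_prob_x_basis_port_qubit)

lemma pmf_z_repeat_protocol_basis:
  assumes "j = (if c then 0 else 1)"
  shows "pmf (run_protocol (port_qubit j) (z_repeat_protocol c k)) (Some j) = 1"
  using assms by (induction k) (auto simp: pmf_bind_bernoulli meas_prob_z_basis_port_qubit)

lemma pmf_z_repeat_protocol_diagonal:
  assumes "j = 2 \<or> j = 3"
  shows "pmf (run_protocol (port_qubit j) (z_repeat_protocol c k)) (Some j) = 1 - (1 / 2) ^ k"
proof (induction k)
  case (Suc k)
  then show ?case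
    using assms pmf_x_protocol[OF assms]
    by (cases c) (auto simp: pmf_bind_bernoulli meas_prob_z_basis_port_qubit algebra_simps)
qed (use assms in auto)

lemma pmf_port_protocol_ge:
  assumes "j < 4"
  shows "1 - (1 / 2) ^ k \<le> pmf (run_protocol (port_qubit j) (port_protocol k)) (Some j)"
proof -
  consider "j = 0" | "j = 1" | "j = 2 \<or> j = 3"
    using assms by linarith
  then show ?thesis
  proof cases
    case diagonal: 3
    then show ?thesis
      using pmf_z_repeat_protocol_diagonal[OF diagonal]
      by (auto simp: port_protocol_def pmf_bind_bernoulli meas_prob_z_basis_port_qubit)
  qed (auto simp: port_protocol_def pmf_bind_bernoulli meas_prob_z_basis_port_qubit
                  pmf_z_repeat_protocol_basis)
qed

lemma pmf_bind_pmf_ge: "pmf M x * pmf (f x) y \<le> pmf (M \<bind> f) y"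
proof -
  have "pmf M x * pmf (f x) y = measure_pmf.expectation M (\<lambda>z. indicator {x} z * pmf (f x) y)"
    by (simp add: measure_pmf_single)
  also have "\<dots> \<le> measure_pmf.expectation M (\<lambda>z. pmf (f z) y)"
    by (intro integral_mono measure_pmf.integrable_const_bound[where B = 1])
       (auto simp: pmf_le_1 indicator_def)
  finally show ?thesis
    by (simp add: pmf_bind)
qed

lemma pmf_map_pmf_ge: "pmf M x \<le> pmf (map_pmf f M) (f x)"
proof -
  have "measure M {x} \<le> measure M (f -` {f x})"
    by (rule measure_pmf.finite_measure_mono) auto
  then show ?thesis
    by (simp add: pmf_map measure_pmf_single)
qed

lemma pmf_funpow_bind_path_ge:
  fixes K :: "'a \<Rightarrow> 'a pmf"
  assumes "0 \<le> q" and "\<And>i. i < n \<Longrightarrow> q \<le> pmf (K (p i)) (p (Suc i))"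
  shows "q ^ n \<le> pmf (((\<lambda>M. M \<bind> K) ^^ n) (return_pmf (p 0))) (p n)"
  using assms(2)
proof (induction n)
  case (Suc n)
  let ?M = "((\<lambda>M. M \<bind> K) ^^ n) (return_pmf (p 0))"
  have "q ^ Suc n = q ^ n * q"
    by simp
  also have "\<dots> \<le> pmf ?M (p n) * pmf (K (p n)) (p (Suc n))"
    using Suc by (intro mult_mono) (simp_all add: assms(1))
  also have "\<dots> \<le> pmf (?M \<bind> K) (p (Suc n))"
    by (rule pmf_bind_pmf_ge)
  finally show ?case
    by simp
qed simp

lemma agent_step_follow_port_ge:
  assumes "v \<noteq> t" and "peb v = Some psi" and "j < deg v"
  shows "pmf (run_protocol psi (rule (deg v))) (Some j)
           \<le> pmf (agent_step deg nbr t peb rule nopeb v) (nbr v j)"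
  using assms pmf_map_pmf_ge[of "run_protocol psi (rule (deg v))" "Some j"
                               "\<lambda>m. case m of None \<Rightarrow> v | Some p \<Rightarrow> if p < deg v then nbr v p else v"]
  by (simp add: agent_step_def del: pmf_map)

lemma gdist_le: "reach_in deg nbr n u v \<Longrightarrow> gdist deg nbr u v \<le> n"
  unfolding gdist_def by (rule Least_le)

lemma reach_in_gdist:
  assumes "port_graph V deg nbr" and "u \<in> V" and "v \<in> V"
  shows "reach_in deg nbr (gdist deg nbr u v) u v"
proof -
  have "\<exists>n. reach_in deg nbr n u v"
    using assms unfolding port_graph_def by blast
  then show ?thesis
    unfolding gdist_def by (rule LeastI_ex)
qed

lemma gdist_eq_0_iff:
  assumes "port_graph V deg nbr" and "u \<in> V" and "v \<in> V"
  shows "gdist deg nbr u v = 0 \<longleftrightarrow> u = v"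
  using reach_in_gdist[OF assms] gdist_le[OF reach_in.refl, of deg nbr v]
  by (auto elim: reach_in.cases)

lemma port_graph_port_toward:
  assumes G: "port_graph V deg nbr" and "v \<in> V" "t \<in> V" "v \<noteq> t"
  shows "\<exists>i<deg v. nbr v i \<in> V \<and> Suc (gdist deg nbr (nbr v i) t) = gdist deg nbr v t"
proof -
  obtain m where m: "gdist deg nbr v t = Suc m"
    using assms gdist_eq_0_iff[OF G] not0_implies_Suc by metis
  then obtain w where "adj deg nbr v w" and w_reach: "reach_in deg nbr m w t"
    using reach_in_gdist[OF G \<open>v \<in> V\<close> \<open>t \<in> V\<close>] by (auto elim: reach_in.cases)
  then obtain i where i: "i < deg v" "nbr v i = w"
    unfolding adj_def by blast
  then have "w \<in> V"
    using G \<open>v \<in> V\<close> unfolding port_graph_def by blast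
  have "gdist deg nbr v t \<le> Suc (gdist deg nbr w t)"
    by (rule gdist_le, rule reach_in.step[OF \<open>adj deg nbr v w\<close>])
       (rule reach_in_gdist[OF G \<open>w \<in> V\<close> \<open>t \<in> V\<close>])
  with m gdist_le[OF w_reach] have "Suc (gdist deg nbr w t) = gdist deg nbr v t"
    by simp
  with i \<open>w \<in> V\<close> show ?thesis
    by blast
qed

lemma treasure_hunt_success_ge:
  assumes G: "port_graph V deg nbr" and deg_le_4: "\<forall>v\<in>V. deg v \<le> 4"
    and "s \<in> V" and "t \<in> V" and "gdist deg nbr s t = D"
    and p_le: "p \<le> (1 - (1 / 2) ^ k) ^ D"
  shows "\<exists>peb :: 'v \<Rightarrow> qubit option.
           (\<forall>v q. peb v = Some q \<longrightarrow> v \<in> V \<and> unit_qubit q) \<and>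
           finite {v. peb v \<noteq> None} \<and> card {v. peb v \<noteq> None} \<le> D \<and>
           p \<le> pmf (agent_pos deg nbr t peb (\<lambda>_. port_protocol k) nopeb s D) t"
proof -
  obtain toward where toward: "\<And>v. v \<in> V \<Longrightarrow> v \<noteq> t \<Longrightarrow>
      toward v < deg v \<and> nbr v (toward v) \<in> V \<and>
      Suc (gdist deg nbr (nbr v (toward v)) t) = gdist deg nbr v t"
    using port_graph_port_toward[OF G _ \<open>t \<in> V\<close>] by metis
  define path where "path i = ((\<lambda>v. nbr v (toward v)) ^^ i) s" for i
  have path: "path i \<in> V \<and> gdist deg nbr (path i) t = D - i" if "i \<le> D" for i
    using that
  proof (induction i)
    case 0
    then show ?case
      using assms by (simp add: path_def)
  next
    case (Suc i)
    then have "path i \<noteq> t"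
      using gdist_eq_0_iff[OF G _ \<open>t \<in> V\<close>] by force
    with Suc toward[of "path i"] show ?case
      by (simp add: path_def, linarith)
  qed
  have path_ne: "path i \<noteq> t" if "i < D" for i
    using that path[of i] gdist_eq_0_iff[OF G _ \<open>t \<in> V\<close>] by force
  define peb where "peb v = (if v \<in> path ` {..<D} then Some (port_qubit (toward v)) else None)" for v
  have step: "1 - (1 / 2) ^ k
      \<le> pmf (agent_step deg nbr t peb (\<lambda>_. port_protocol k) nopeb (path i)) (path (Suc i))"
    if "i < D" for i
  proof -
    have toward_i: "toward (path i) < deg (path i)" "deg (path i) \<le> 4"
      using that path[of i] path_ne[of i] toward deg_le_4 by auto
    have peb_i: "peb (path i) = Some (port_qubit (toward (path i)))"
      using that by (simp add: peb_def)
    have "1 - (1 / 2) ^ k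
        \<le> pmf (run_protocol (port_qubit (toward (path i))) (port_protocol k)) (Some (toward (path i)))"
      using toward_i by (intro pmf_port_protocol_ge) simp
    also have "\<dots> \<le> pmf (agent_step deg nbr t peb (\<lambda>_. port_protocol k) nopeb (path i))
                        (nbr (path i) (toward (path i)))"
      using path_ne[OF that] peb_i toward_i(1) by (rule agent_step_follow_port_ge)
    finally show ?thesis
      by (simp add: path_def)
  qed
  have peb_support: "{v. peb v \<noteq> None} = path ` {..<D}"
    by (auto simp: peb_def)
  have "\<forall>v q. peb v = Some q \<longrightarrow> v \<in> V \<and> unit_qubit q"
  proof (intro allI impI)
    fix v q
    assume "peb v = Some q"
    then obtain i where "i < D" "v = path i" "q = port_qubit (toward v)"
      by (auto simp: peb_def split: if_splits)
    then show "v \<in> V \<and> unit_qubit q"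
      using path[of i] unit_qubit_port_qubit by simp
  qed
  moreover have "finite {v. peb v \<noteq> None}" "card {v. peb v \<noteq> None} \<le> D"
    unfolding peb_support using card_image_le[of "{..<D}" path] by simp_all
  moreover have "p \<le> pmf (agent_pos deg nbr t peb (\<lambda>_. port_protocol k) nopeb s D) t"
  proof -
    have "path D = t"
      using path[of D] gdist_eq_0_iff[OF G _ \<open>t \<in> V\<close>] by auto
    moreover have "path 0 = s"
      by (simp add: path_def)
    moreover have "0 \<le> 1 - (1 / 2 :: real) ^ k"
      by (simp add: power_le_one)
    ultimately show ?thesis
      using pmf_funpow_bind_path_ge[where p = path and n = D, OF _ step] p_le
      by (simp add: agent_pos_def)
  qed
  ultimately show ?thesis
    by blast
qed

lemma log_precision_schedule:
  assumes "\<epsilon> > 0"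
  obtains k :: "nat \<Rightarrow> nat" and C :: real
  where "\<And>D. real D * (1 / 2) ^ k D \<le> \<epsilon>" and "\<And>D. real (k D) + 2 \<le> C * (1 + ln (real D))"
proof -
  obtain a :: nat where a: "(1 / 2 :: real) ^ a < \<epsilon>"
    using real_arch_pow_inv[of \<epsilon> "1 / 2"] assms by auto
  define b where "b D = nat \<lceil>log 2 (real D)\<rceil>" for D :: nat
  have D_le: "real D \<le> 2 ^ b D" for D
  proof (cases "D = 0")
    case False
    then have "log 2 (real D) \<le> real (b D)"
      unfolding b_def by linarith
    then have "2 powr log 2 (real D) \<le> 2 powr real (b D)"
      by simp
    with False show ?thesis
      by (simp add: powr_realpow)
  qed simp
  have b_le: "real (b D) \<le> ln (real D) / ln 2 + 1" for D
  proof (cases "D = 0")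
    case False
    then have "real (b D) = of_int \<lceil>log 2 (real D)\<rceil>"
      unfolding b_def by simp
    also have "\<dots> \<le> log 2 (real D) + 1"
      by simp
    finally show ?thesis
      by (simp add: log_def)
  qed (simp add: b_def log_def)
  show ?thesis
  proof (rule that[of "\<lambda>D. a + b D" "real a + 3 + 1 / ln 2"])
    fix D :: nat
    have "real D * (1 / 2) ^ (a + b D) = real D / 2 ^ b D * (1 / 2) ^ a"
      by (simp add: power_add power_divide)
    also have "\<dots> \<le> (1 / 2) ^ a"
      using D_le[of D] by (intro mult_left_le_one_le) auto
    finally show "real D * (1 / 2) ^ (a + b D) \<le> \<epsilon>"
      using a by linarith
    have "0 \<le> ln (real D)"
      by (cases "D = 0") auto
    then have "0 \<le> (real a + 3) * ln (real D)" "0 \<le> 1 / ln (2 :: real)"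
      by simp_all
    moreover have "(real a + 3 + 1 / ln 2) * (1 + ln (real D))
        = real a + 3 + (real a + 3) * ln (real D) + 1 / ln 2 + ln (real D) / ln 2"
      by (simp add: algebra_simps add_divide_distrib)
    ultimately show "real (a + b D) + 2 \<le> (real a + 3 + 1 / ln 2) * (1 + ln (real D))"
      using b_le[of D] by linarith
  qed
qed

theorem theorem5:
  fixes \<epsilon> :: real
  assumes "\<epsilon> > 0"
  shows "\<exists>C::real. \<forall>D::nat. \<exists>(rule :: nat \<Rightarrow> protocol) (nopeb :: nat \<Rightarrow> nat option pmf).
     (\<forall>d. real (num_meas (rule d)) \<le> C * (1 + ln (real D))) \<and>
     (\<forall>(V :: 'v set) deg nbr s t.
        port_graph V deg nbr \<and> (\<forall>v\<in>V. deg v \<le> 4) \<and> s \<in> V \<and> t \<in> V \<and>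
        gdist deg nbr s t = D \<longrightarrow>
        (\<exists>peb :: 'v \<Rightarrow> qubit option.
           (\<forall>v q. peb v = Some q \<longrightarrow> v \<in> V \<and> unit_qubit q) \<and>
           finite {v. peb v \<noteq> None} \<and> card {v. peb v \<noteq> None} \<le> D \<and>
           pmf (agent_pos deg nbr t peb rule nopeb s D) t \<ge> 1 - \<epsilon>))"
proof -
  obtain k C where precise: "\<And>D. real D * (1 / 2) ^ k D \<le> \<epsilon>"
    and short: "\<And>D. real (k D) + 2 \<le> C * (1 + ln (real D))"
    using log_precision_schedule[OF assms] by metis
  have measurements: "real (num_meas (port_protocol (k D))) \<le> C * (1 + ln (real D))" for D
    using of_nat_le_iff[where 'a = real, THEN iffD2, OF num_meas_port_protocol[of "k D"]] short[of D]
    by simp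
  have bernoulli: "1 - \<epsilon> \<le> (1 - (1 / 2) ^ k D) ^ D" for D
    using Bernoulli_inequality[of "- ((1 / 2 :: real) ^ k D)" D] precise[of D]
    by (simp add: power_le_one)
  show ?thesis
    by (intro exI[of _ C] allI exI[of _ "\<lambda>_. port_protocol (k D)" for D]
          exI[of _ "\<lambda>_. return_pmf None"] conjI impI)
       (rule measurements, elim conjE, rule treasure_hunt_success_ge[OF _ _ _ _ _ bernoulli], assumption+)
qed

end
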